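(* Let $n\ge 2$, let $\mathcal{S}\subseteq(\mathbb{C}^d)^{\otimes n}$ be the permutation-symmetric subspace, and let $B=P\,J\,P^{-1}$ be a $d\times d$ complex matrix with Jordan normal form $J$, whose distinct eigenvalues are $\lambda_1,\ldots,\lambda_p$. Let $\tilde\lambda_1,\ldots,\tilde\lambda_p$ be pairwise distinct complex numbers, and let $\tilde J$ be obtained from $J$ by replacing, in every Jordan block, the eigenvalue $\lambda_i$ by $\tilde\lambda_i$ (keeping the block sizes and the superdiagonal ones), and set $\tilde B=P\tilde J P^{-1}$. Then for every $|\psi\rangle\in\mathcal{S}$: $B_{(1)}|\psi\rangle\in\mathcal{S}$ if and only if $\tilde B_{(1)}|\psi\rangle\in\mathcal{S}$.
   Context: $\mathcal{S}$ is the set of vectors in $(\mathbb{C}^d)^{\otimes n}$ invariant under all permutations of the $n$ tensor factors. For a $d\times d$ matrix $Y$, $Y_{(1)}$ denotes $Y\otimes\mathbb{I}\otimes\cdots\otimes\mathbb{I}$ on $(\mathbb{C}^d)^{\otimes n}$. One says $B$ stabilizes $|\psi\rangle\in\mathcal{S}$ if $B_{(1)}|\psi\rangle\in\mathcal{S}$; the theorem says the set of states stabilized by $B$ depends only on the Jordan block structure (which blocks share an eigenvalue), not on the eigenvalue values. *)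

theory Defs
  imports "Jordan_Normal_Form.Jordan_Normal_Form" "HOL-Combinatorics.Permutations"
begin

text \<open>Vectors of (C^d)^{tensor n} are represented by their coordinates: functions
  from index tuples i (tensor factors 0..n-1, each index in 0..d-1) to complex numbers.
  Tensor factor 1 of the paper is factor 0 here.\<close>

definition tuples :: "nat \<Rightarrow> nat \<Rightarrow> (nat \<Rightarrow> nat) set" where
  "tuples n d = {i. (\<forall>k<n. i k < d) \<and> (\<forall>k\<ge>n. i k = 0)}"

definition symmetric_tensor :: "nat \<Rightarrow> nat \<Rightarrow> ((nat \<Rightarrow> nat) \<Rightarrow> complex) \<Rightarrow> bool" where
  "symmetric_tensor n d \<psi> \<longleftrightarrow>
     (\<forall>i\<in>tuples n d. \<forall>\<sigma>. \<sigma> permutes {..<n} \<longrightarrow> \<psi> (i \<circ> \<sigma>) = \<psi> i)"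

definition apply_first :: "nat \<Rightarrow> complex mat \<Rightarrow> ((nat \<Rightarrow> nat) \<Rightarrow> complex) \<Rightarrow> ((nat \<Rightarrow> nat) \<Rightarrow> complex)" where
  "apply_first d Y \<psi> = (\<lambda>i. \<Sum>j<d. Y $$ (i 0, j) * \<psi> (i(0 := j)))"

end

theory Submission
  imports Defs
begin

text \<open>For symmetric \<open>\<psi>\<close>, the vector \<open>B\<^sub>(\<^sub>1\<^sub>)\<psi>\<close> is symmetric iff \<open>B\<close> acting on the first
  tensor factor agrees with \<open>B\<close> acting on every other factor k. Freezing all factors but the first
  and the k-th turns \<open>\<psi>\<close> into a \<open>d \<times> d\<close> matrix \<open>M\<close>, and the agreement becomes \<open>B M = M B\<^sup>T\<close>.
  Writing \<open>X = P\<^sup>-\<^sup>1 M (P\<^sup>-\<^sup>1)\<^sup>T\<close>, this is \<open>J X = X J\<^sup>T\<close>, whose \<open>(a, b)\<close> entry compares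
  \<open>(\<lambda>\<^sub>a - \<lambda>\<^sub>b) X\<^sub>a\<^sub>b\<close> with entries to the right of and below \<open>(a, b)\<close>. Descending from the bottom-right
  corner, \<open>X\<^sub>a\<^sub>b = 0\<close> whenever \<open>\<lambda>\<^sub>a \<noteq> \<lambda>\<^sub>b\<close>, so the equation only depends on which diagonal
  positions carry equal eigenvalues, which an injective relabelling preserves.\<close>

definition apply_factor :: "nat \<Rightarrow> nat \<Rightarrow> complex mat \<Rightarrow> ((nat \<Rightarrow> nat) \<Rightarrow> complex) \<Rightarrow> (nat \<Rightarrow> nat) \<Rightarrow> complex" where
  "apply_factor d k Y \<psi> = (\<lambda>i. \<Sum>j<d. Y $$ (i k, j) * \<psi> (i(k := j)))"

lemma apply_first_eq_apply_factor: "apply_first d Y \<psi> = apply_factor d 0 Y \<psi>"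
  by (simp add: apply_first_def apply_factor_def)

lemma tuples_update: "i \<in> tuples n d \<Longrightarrow> k < n \<Longrightarrow> j < d \<Longrightarrow> i(k := j) \<in> tuples n d"
  unfolding tuples_def by auto

lemma tuples_less: "i \<in> tuples n d \<Longrightarrow> k < n \<Longrightarrow> i k < d"
  unfolding tuples_def by auto

lemma apply_first_permute:
  assumes "0 < n" and sym: "symmetric_tensor n d \<psi>" and i: "i \<in> tuples n d"
    and \<sigma>: "\<sigma> permutes {..<n}"
  shows "apply_first d Y \<psi> (i \<circ> \<sigma>) = apply_factor d (\<sigma> 0) Y \<psi> i"
proof -
  have \<sigma>0: "\<sigma> 0 < n" using permutes_in_image[OF \<sigma>, of 0] \<open>0 < n\<close> by simp
  have "\<psi> ((i \<circ> \<sigma>)(0 := j)) = \<psi> (i(\<sigma> 0 := j))" if "j < d" for j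
  proof -
    have "(i \<circ> \<sigma>)(0 := j) = i(\<sigma> 0 := j) \<circ> \<sigma>"
    proof
      fix x
      show "((i \<circ> \<sigma>)(0 := j)) x = (i(\<sigma> 0 := j) \<circ> \<sigma>) x"
        using permutes_inj[OF \<sigma>] by (cases "x = 0") (auto dest: injD)
    qed
    with sym \<sigma> tuples_update[OF i \<sigma>0 that] show ?thesis
      unfolding symmetric_tensor_def by simp
  qed
  then show ?thesis by (auto simp: apply_first_def apply_factor_def intro!: sum.cong)
qed

lemma symmetric_apply_first_iff:
  assumes "0 < n" and sym: "symmetric_tensor n d \<psi>"
  shows "symmetric_tensor n d (apply_first d Y \<psi>) \<longleftrightarrow>
    (\<forall>i\<in>tuples n d. \<forall>k<n. apply_factor d k Y \<psi> i = apply_factor d 0 Y \<psi> i)"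
proof
  assume sym_Y: "symmetric_tensor n d (apply_first d Y \<psi>)"
  show "\<forall>i\<in>tuples n d. \<forall>k<n. apply_factor d k Y \<psi> i = apply_factor d 0 Y \<psi> i"
  proof (intro ballI allI impI)
    fix i k assume i: "i \<in> tuples n d" and "k < n"
    have swap: "Transposition.transpose 0 k permutes {..<n}"
      by (rule permutes_swap_id) (use \<open>0 < n\<close> \<open>k < n\<close> in auto)
    have "apply_factor d k Y \<psi> i = apply_first d Y \<psi> (i \<circ> Transposition.transpose 0 k)"
      using apply_first_permute[OF assms i swap] by simp
    also have "\<dots> = apply_first d Y \<psi> i"
      using sym_Y i swap unfolding symmetric_tensor_def by blast
    finally show "apply_factor d k Y \<psi> i = apply_factor d 0 Y \<psi> i"
      unfolding apply_first_eq_apply_factor .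
  qed
next
  assume agree: "\<forall>i\<in>tuples n d. \<forall>k<n. apply_factor d k Y \<psi> i = apply_factor d 0 Y \<psi> i"
  show "symmetric_tensor n d (apply_first d Y \<psi>)"
    unfolding symmetric_tensor_def
  proof (intro ballI allI impI)
    fix i \<sigma> assume i: "i \<in> tuples n d" and \<sigma>: "\<sigma> permutes {..<n}"
    have "\<sigma> 0 < n" using permutes_in_image[OF \<sigma>, of 0] \<open>0 < n\<close> by simp
    have "apply_first d Y \<psi> (i \<circ> \<sigma>) = apply_factor d (\<sigma> 0) Y \<psi> i"
      by (rule apply_first_permute[OF assms i \<sigma>])
    also have "\<dots> = apply_factor d 0 Y \<psi> i"
      using agree i \<open>\<sigma> 0 < n\<close> by blast
    finally show "apply_first d Y \<psi> (i \<circ> \<sigma>) = apply_first d Y \<psi> i"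
      unfolding apply_first_eq_apply_factor .
  qed
qed

definition slice_mat :: "nat \<Rightarrow> ((nat \<Rightarrow> nat) \<Rightarrow> complex) \<Rightarrow> (nat \<Rightarrow> nat) \<Rightarrow> nat \<Rightarrow> complex mat" where
  "slice_mat d \<psi> i k = mat d d (\<lambda>(a, b). \<psi> (i(0 := a, k := b)))"

lemma dim_slice_mat [simp]:
  "dim_row (slice_mat d \<psi> i k) = d" "dim_col (slice_mat d \<psi> i k) = d"
  by (simp_all add: slice_mat_def)

lemma slice_mat_carrier [simp]: "slice_mat d \<psi> i k \<in> carrier_mat d d"
  by (simp add: slice_mat_def)

lemma mult_slice_mat_index:
  assumes "k \<noteq> 0" and "Y \<in> carrier_mat d d" and "a < d" and "b < d"
  shows "(Y * slice_mat d \<psi> i k) $$ (a, b) = apply_factor d 0 Y \<psi> (i(0 := a, k := b))"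
proof -
  have "i(0 := a, k := b, 0 := c) = i(0 := c, k := b)" for c
    using \<open>k \<noteq> 0\<close> by (simp add: fun_upd_twist)
  then show ?thesis
    using assms by (auto simp: slice_mat_def apply_factor_def scalar_prod_def lessThan_atLeast0
        intro!: sum.cong)
qed

lemma slice_mat_mult_transpose_index:
  assumes "Y \<in> carrier_mat d d" and "a < d" and "b < d"
  shows "(slice_mat d \<psi> i k * transpose_mat Y) $$ (a, b) = apply_factor d k Y \<psi> (i(0 := a, k := b))"
  using assms by (auto simp: slice_mat_def apply_factor_def scalar_prod_def lessThan_atLeast0
      mult.commute intro!: sum.cong)

lemma apply_factors_agree_iff_slices_intertwine:
  assumes Y: "Y \<in> carrier_mat d d" and "0 < n"
  shows "(\<forall>i\<in>tuples n d. \<forall>k<n. apply_factor d k Y \<psi> i = apply_factor d 0 Y \<psi> i) \<longleftrightarrow>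
    (\<forall>i\<in>tuples n d. \<forall>k. 0 < k \<and> k < n \<longrightarrow>
       Y * slice_mat d \<psi> i k = slice_mat d \<psi> i k * transpose_mat Y)"
proof
  assume agree: "\<forall>i\<in>tuples n d. \<forall>k<n. apply_factor d k Y \<psi> i = apply_factor d 0 Y \<psi> i"
  show "\<forall>i\<in>tuples n d. \<forall>k. 0 < k \<and> k < n \<longrightarrow>
      Y * slice_mat d \<psi> i k = slice_mat d \<psi> i k * transpose_mat Y"
  proof (intro ballI allI impI)
    fix i k assume i: "i \<in> tuples n d" and k: "0 < k \<and> k < n"
    show "Y * slice_mat d \<psi> i k = slice_mat d \<psi> i k * transpose_mat Y"
    proof (rule eq_matI)
      fix a b assume "a < dim_row (slice_mat d \<psi> i k * transpose_mat Y)"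
        "b < dim_col (slice_mat d \<psi> i k * transpose_mat Y)"
      then have ab: "a < d" "b < d" using Y by auto
      have "i(0 := a, k := b) \<in> tuples n d"
        using tuples_update[OF tuples_update[OF i \<open>0 < n\<close> ab(1)] _ ab(2)] k by simp
      then show "(Y * slice_mat d \<psi> i k) $$ (a, b) = (slice_mat d \<psi> i k * transpose_mat Y) $$ (a, b)"
        using agree k mult_slice_mat_index[OF _ Y ab] slice_mat_mult_transpose_index[OF Y ab]
        by (metis not_less0)
    qed (use Y in auto)
  qed
next
  assume intertwine: "\<forall>i\<in>tuples n d. \<forall>k. 0 < k \<and> k < n \<longrightarrow>
      Y * slice_mat d \<psi> i k = slice_mat d \<psi> i k * transpose_mat Y"
  show "\<forall>i\<in>tuples n d. \<forall>k<n. apply_factor d k Y \<psi> i = apply_factor d 0 Y \<psi> i"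
  proof (intro ballI allI impI)
    fix i k assume i: "i \<in> tuples n d" and "k < n"
    show "apply_factor d k Y \<psi> i = apply_factor d 0 Y \<psi> i"
    proof (cases "k = 0")
      case False
      have ab: "i 0 < d" "i k < d" using tuples_less[OF i] \<open>k < n\<close> \<open>0 < n\<close> by auto
      have "apply_factor d k Y \<psi> i = (slice_mat d \<psi> i k * transpose_mat Y) $$ (i 0, i k)"
        using slice_mat_mult_transpose_index[OF Y ab] by simp
      also have "\<dots> = (Y * slice_mat d \<psi> i k) $$ (i 0, i k)"
        using intertwine i \<open>k < n\<close> False by simp
      also have "\<dots> = apply_factor d 0 Y \<psi> i"
        using mult_slice_mat_index[OF False Y ab] by simp
      finally show ?thesis .
    qed simp
  qed
qed

lemma symmetric_apply_first_iff_slices_intertwine: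
  assumes "Y \<in> carrier_mat d d" and "0 < n" and "symmetric_tensor n d \<psi>"
  shows "symmetric_tensor n d (apply_first d Y \<psi>) \<longleftrightarrow>
    (\<forall>i\<in>tuples n d. \<forall>k. 0 < k \<and> k < n \<longrightarrow>
       Y * slice_mat d \<psi> i k = slice_mat d \<psi> i k * transpose_mat Y)"
  using symmetric_apply_first_iff[OF assms(2,3)] apply_factors_agree_iff_slices_intertwine[OF assms(1,2)]
  by simp

lemma congruence_cancel:
  fixes P Q A B :: "'a::comm_ring_1 mat"
  assumes P: "P \<in> carrier_mat d d" and Q: "Q \<in> carrier_mat d d" and QP: "Q * P = 1\<^sub>m d"
    and A: "A \<in> carrier_mat d d" and B: "B \<in> carrier_mat d d"
  shows "P * A * transpose_mat P = P * B * transpose_mat P \<longleftrightarrow> A = B"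
proof
  have tQP: "transpose_mat P * transpose_mat Q = 1\<^sub>m d"
    using transpose_mult[OF Q P] QP by simp
  have recover: "Q * (P * C * transpose_mat P) * transpose_mat Q = C" if C: "C \<in> carrier_mat d d" for C
  proof -
    have "Q * (P * C * transpose_mat P) * transpose_mat Q = (Q * P) * C * (transpose_mat P * transpose_mat Q)"
      using P Q C by (simp add: assoc_mult_mat[of _ d d _ d _ d])
    also have "\<dots> = C" using C by (simp add: QP tQP)
    finally show ?thesis .
  qed
  assume "P * A * transpose_mat P = P * B * transpose_mat P"
  then show "A = B" using recover[OF A] recover[OF B] by metis
qed simp

lemma conjugate_intertwines_iff:
  fixes P Q J M :: "'a::comm_ring_1 mat"
  assumes P: "P \<in> carrier_mat d d" and Q: "Q \<in> carrier_mat d d"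
    and PQ: "P * Q = 1\<^sub>m d" and QP: "Q * P = 1\<^sub>m d"
    and J: "J \<in> carrier_mat d d" and M: "M \<in> carrier_mat d d"
  shows "(P * J * Q) * M = M * transpose_mat (P * J * Q) \<longleftrightarrow>
         J * (Q * M * transpose_mat Q) = (Q * M * transpose_mat Q) * transpose_mat J"
proof -
  define X where "X = Q * M * transpose_mat Q"
  have X: "X \<in> carrier_mat d d" using Q M by (simp add: X_def)
  have tPQ: "transpose_mat Q * transpose_mat P = 1\<^sub>m d"
    using transpose_mult[OF P Q] PQ by simp
  have tQP: "transpose_mat P * transpose_mat Q = 1\<^sub>m d"
    using transpose_mult[OF Q P] QP by simp
  have "M = (P * Q) * M * (transpose_mat Q * transpose_mat P)"
    using M by (simp add: PQ tPQ)
  also have "\<dots> = P * X * transpose_mat P"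
    using P Q M by (simp add: X_def assoc_mult_mat[of _ d d _ d _ d])
  finally have M_eq: "M = P * X * transpose_mat P" .
  have left: "(P * J * Q) * M = P * (J * X) * transpose_mat P"
  proof -
    have "(P * J * Q) * M = P * J * (Q * P) * X * transpose_mat P"
      using P Q J X by (simp add: M_eq assoc_mult_mat[of _ d d _ d _ d])
    also have "\<dots> = P * (J * X) * transpose_mat P"
      using P J X by (simp add: QP assoc_mult_mat[of _ d d _ d _ d])
    finally show ?thesis .
  qed
  have right: "M * transpose_mat (P * J * Q) = P * (X * transpose_mat J) * transpose_mat P"
  proof -
    have "transpose_mat (P * J * Q) = transpose_mat Q * transpose_mat J * transpose_mat P"
      using P J Q by (simp add: transpose_mult[of _ d d _ d] assoc_mult_mat[of _ d d _ d _ d])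
    then have "M * transpose_mat (P * J * Q)
        = P * X * (transpose_mat P * transpose_mat Q) * transpose_mat J * transpose_mat P"
      using P Q J X by (simp add: M_eq assoc_mult_mat[of _ d d _ d _ d])
    also have "\<dots> = P * (X * transpose_mat J) * transpose_mat P"
      using P J X by (simp add: tQP assoc_mult_mat[of _ d d _ d _ d])
    finally show ?thesis .
  qed
  show ?thesis
    unfolding left right X_def[symmetric]
    using congruence_cancel[OF P Q QP] J X by simp
qed

definition bidiag_mat :: "nat \<Rightarrow> (nat \<Rightarrow> 'a::{zero,one}) \<Rightarrow> (nat \<Rightarrow> bool) \<Rightarrow> 'a mat" where
  "bidiag_mat D \<mu> s = mat D D (\<lambda>(a, b). if a = b then \<mu> a else if b = Suc a \<and> s a then 1 else 0)"

lemma dim_bidiag_mat [simp]: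
  "dim_row (bidiag_mat D \<mu> s) = D" "dim_col (bidiag_mat D \<mu> s) = D"
  by (simp_all add: bidiag_mat_def)

lemma bidiag_mat_carrier [simp]: "bidiag_mat D \<mu> s \<in> carrier_mat D D"
  by (simp add: bidiag_mat_def)

lemma bidiag_mat_cong: "(\<And>a. a < D \<Longrightarrow> \<mu> a = \<nu> a) \<Longrightarrow> bidiag_mat D \<mu> s = bidiag_mat D \<nu> s"
  unfolding bidiag_mat_def by (rule eq_matI) auto

lemma bidiag_mat_mult_index:
  fixes \<mu> :: "nat \<Rightarrow> 'a::comm_semiring_1"
  assumes "X \<in> carrier_mat D D" and "\<forall>i. s i \<longrightarrow> Suc i < D" and "a < D" and "b < D"
  shows "(bidiag_mat D \<mu> s * X) $$ (a, b) = \<mu> a * X $$ (a, b) + (if s a then X $$ (Suc a, b) else 0)"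
proof -
  have "(bidiag_mat D \<mu> s * X) $$ (a, b) = (\<Sum>c<D. bidiag_mat D \<mu> s $$ (a, c) * X $$ (c, b))"
    using assms by (auto simp: scalar_prod_def bidiag_mat_def lessThan_atLeast0 intro!: sum.cong)
  also have "\<dots> = (\<Sum>c<D. (if c = a then \<mu> a * X $$ (a, b) else 0)
                         + (if s a \<and> c = Suc a then X $$ (Suc a, b) else 0))"
    using assms by (intro sum.cong) (auto simp: bidiag_mat_def)
  also have "\<dots> = \<mu> a * X $$ (a, b) + (if s a then X $$ (Suc a, b) else 0)"
    using assms by (simp add: sum.distrib)
  finally show ?thesis .
qed

lemma mult_transpose_bidiag_mat_index:
  fixes \<mu> :: "nat \<Rightarrow> 'a::comm_semiring_1"
  assumes "X \<in> carrier_mat D D" and "\<forall>i. s i \<longrightarrow> Suc i < D" and "a < D" and "b < D"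
  shows "(X * transpose_mat (bidiag_mat D \<mu> s)) $$ (a, b) = \<mu> b * X $$ (a, b) + (if s b then X $$ (a, Suc b) else 0)"
proof -
  have "(X * transpose_mat (bidiag_mat D \<mu> s)) $$ (a, b) = (\<Sum>c<D. X $$ (a, c) * bidiag_mat D \<mu> s $$ (b, c))"
    using assms by (auto simp: scalar_prod_def bidiag_mat_def lessThan_atLeast0 intro!: sum.cong)
  also have "\<dots> = (\<Sum>c<D. (if c = b then \<mu> b * X $$ (a, b) else 0)
                         + (if s b \<and> c = Suc b then X $$ (a, Suc b) else 0))"
    using assms by (intro sum.cong) (auto simp: bidiag_mat_def mult.commute)
  also have "\<dots> = \<mu> b * X $$ (a, b) + (if s b then X $$ (a, Suc b) else 0)"
    using assms by (simp add: sum.distrib)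
  finally show ?thesis .
qed

lemma bidiag_intertwines_iff:
  fixes \<mu> :: "nat \<Rightarrow> 'a::comm_semiring_1"
  assumes "X \<in> carrier_mat D D" and "\<forall>i. s i \<longrightarrow> Suc i < D"
  shows "bidiag_mat D \<mu> s * X = X * transpose_mat (bidiag_mat D \<mu> s) \<longleftrightarrow>
    (\<forall>a<D. \<forall>b<D. \<mu> a * X $$ (a, b) + (if s a then X $$ (Suc a, b) else 0)
                = \<mu> b * X $$ (a, b) + (if s b then X $$ (a, Suc b) else 0))"
  (is "?J * X = X * transpose_mat ?J \<longleftrightarrow> ?entrywise")
proof
  assume eq: "?J * X = X * transpose_mat ?J"
  show ?entrywise
  proof (intro allI impI)
    fix a b assume "a < D" "b < D"
    with eq show "\<mu> a * X $$ (a, b) + (if s a then X $$ (Suc a, b) else 0)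
                = \<mu> b * X $$ (a, b) + (if s b then X $$ (a, Suc b) else 0)"
      using bidiag_mat_mult_index[OF assms] mult_transpose_bidiag_mat_index[OF assms] by metis
  qed
next
  assume entrywise: ?entrywise
  show "?J * X = X * transpose_mat ?J"
  proof (rule eq_matI)
    fix a b assume "a < dim_row (X * transpose_mat ?J)" "b < dim_col (X * transpose_mat ?J)"
    then have "a < D" "b < D" using assms(1) by auto
    with entrywise show "(?J * X) $$ (a, b) = (X * transpose_mat ?J) $$ (a, b)"
      using bidiag_mat_mult_index[OF assms] mult_transpose_bidiag_mat_index[OF assms] by metis
  qed (use assms(1) in auto)
qed

lemma bidiag_intertwiner_vanishes:
  fixes \<mu> :: "nat \<Rightarrow> 'a::idom"
  assumes X: "X \<in> carrier_mat D D"
    and chain: "\<forall>i. s i \<longrightarrow> Suc i < D \<and> \<mu> (Suc i) = \<mu> i"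
    and eq: "bidiag_mat D \<mu> s * X = X * transpose_mat (bidiag_mat D \<mu> s)"
  shows "a < D \<Longrightarrow> b < D \<Longrightarrow> \<mu> a \<noteq> \<mu> b \<Longrightarrow> X $$ (a, b) = 0"
proof (induction "2 * D - (a + b)" arbitrary: a b rule: less_induct)
  case less
  \<comment> \<open>the superdiagonal terms sit at \<open>(a + 1, b)\<close> and \<open>(a, b + 1)\<close>, inside the same
    block, hence with the same eigenvalue mismatch and closer to the corner\<close>
  have right: "(if s a then X $$ (Suc a, b) else 0) = 0"
    using chain less.prems less.hyps[of "Suc a" b] by auto
  have below: "(if s b then X $$ (a, Suc b) else 0) = 0"
    using chain less.prems less.hyps[of a "Suc b"] by auto
  have "\<mu> a * X $$ (a, b) + (if s a then X $$ (Suc a, b) else 0)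
      = \<mu> b * X $$ (a, b) + (if s b then X $$ (a, Suc b) else 0)"
    using eq less.prems bidiag_intertwines_iff[OF X] chain by blast
  then have "(\<mu> a - \<mu> b) * X $$ (a, b) = 0"
    unfolding right below by (simp add: algebra_simps)
  with less.prems show ?case by simp
qed

lemma bidiag_intertwines_relabel_imp:
  fixes \<mu> \<nu> :: "nat \<Rightarrow> 'a::idom"
  assumes X: "X \<in> carrier_mat D D"
    and chain: "\<forall>i. s i \<longrightarrow> Suc i < D \<and> \<mu> (Suc i) = \<mu> i"
    and same_eq: "\<forall>a<D. \<forall>b<D. \<mu> a = \<mu> b \<longleftrightarrow> \<nu> a = \<nu> b"
    and eq: "bidiag_mat D \<mu> s * X = X * transpose_mat (bidiag_mat D \<mu> s)"
  shows "bidiag_mat D \<nu> s * X = X * transpose_mat (bidiag_mat D \<nu> s)"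
proof -
  have s_bound: "\<forall>i. s i \<longrightarrow> Suc i < D" using chain by blast
  have entry: "\<mu> a * X $$ (a, b) + (if s a then X $$ (Suc a, b) else 0)
             = \<mu> b * X $$ (a, b) + (if s b then X $$ (a, Suc b) else 0)" if "a < D" "b < D" for a b
    using eq that bidiag_intertwines_iff[OF X s_bound] by blast
  have "\<nu> a * X $$ (a, b) + (if s a then X $$ (Suc a, b) else 0)
      = \<nu> b * X $$ (a, b) + (if s b then X $$ (a, Suc b) else 0)" if ab: "a < D" "b < D" for a b
  proof (cases "\<mu> a = \<mu> b")
    case True
    with same_eq ab have "\<nu> a = \<nu> b" by blast
    with entry[OF ab] True show ?thesis by simp
  next
    case False
    note vanish = bidiag_intertwiner_vanishes[OF X chain eq]
    have "X $$ (a, b) = 0" using vanish ab False .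
    moreover have "X $$ (Suc a, b) = 0" if "s a"
      using vanish[of "Suc a" b] chain that ab False by simp
    moreover have "X $$ (a, Suc b) = 0" if "s b"
      using vanish[of a "Suc b"] chain that ab False by simp
    ultimately show ?thesis by simp
  qed
  then show ?thesis using bidiag_intertwines_iff[OF X s_bound] by blast
qed

lemma bidiag_intertwines_relabel:
  fixes \<mu> \<nu> :: "nat \<Rightarrow> 'a::idom"
  assumes X: "X \<in> carrier_mat D D"
    and chain: "\<forall>i. s i \<longrightarrow> Suc i < D \<and> \<mu> (Suc i) = \<mu> i"
    and same_eq: "\<forall>a<D. \<forall>b<D. \<mu> a = \<mu> b \<longleftrightarrow> \<nu> a = \<nu> b"
  shows "bidiag_mat D \<mu> s * X = X * transpose_mat (bidiag_mat D \<mu> s) \<longleftrightarrow>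
         bidiag_mat D \<nu> s * X = X * transpose_mat (bidiag_mat D \<nu> s)"
proof -
  have chain': "\<forall>i. s i \<longrightarrow> Suc i < D \<and> \<nu> (Suc i) = \<nu> i"
    using chain same_eq by (meson Suc_lessD)
  show ?thesis
    using bidiag_intertwines_relabel_imp[OF X chain same_eq]
      bidiag_intertwines_relabel_imp[OF X chain'] same_eq by blast
qed

fun jordan_diag :: "(nat \<times> 'a) list \<Rightarrow> nat \<Rightarrow> 'a::zero" where
  "jordan_diag [] i = 0"
| "jordan_diag ((k, a) # xs) i = (if i < k then a else jordan_diag xs (i - k))"

fun jordan_superdiag :: "(nat \<times> 'a) list \<Rightarrow> nat \<Rightarrow> bool" where
  "jordan_superdiag [] i = False"
| "jordan_superdiag ((k, a) # xs) i = (if i < k then Suc i < k else jordan_superdiag xs (i - k))"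

lemma jordan_matrix_index:
  assumes "a < sum_list (map fst n_as)" and "b < sum_list (map fst n_as)"
  shows "jordan_matrix n_as $$ (a, b) =
    (if a = b then jordan_diag n_as a else if b = Suc a \<and> jordan_superdiag n_as a then 1 else 0)"
  using assms
proof (induction n_as arbitrary: a b)
  case Nil
  then show ?case by simp
next
  case (Cons x xs)
  obtain k c where x: "x = (k, c)" by force
  consider "a < k" "b < k" | "a < k" "\<not> b < k" | "\<not> a < k" "b < k" | "\<not> a < k" "\<not> b < k"
    by blast
  then show ?case
  proof cases
    case 4
    have "(a = b) = (a - k = b - k)" "(b = Suc a) = (b - k = Suc (a - k))"
      using 4 by auto
    with 4 Cons show ?thesis
      unfolding x jordan_matrix_Cons by (subst index_mat_four_block) auto
  qed (use Cons.prems in \<open>auto simp: x jordan_matrix_Cons\<close>)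
qed

lemma jordan_matrix_bidiag:
  "jordan_matrix n_as = bidiag_mat (sum_list (map fst n_as)) (jordan_diag n_as) (jordan_superdiag n_as)"
  by (rule eq_matI) (simp_all add: bidiag_mat_def jordan_matrix_index)

lemma jordan_diag_map:
  "i < sum_list (map fst n_as) \<Longrightarrow> jordan_diag (map (\<lambda>(k, a). (k, f a)) n_as) i = f (jordan_diag n_as i)"
  by (induction n_as arbitrary: i) auto

lemma jordan_superdiag_map: "jordan_superdiag (map (\<lambda>(k, a). (k, f a)) n_as) = jordan_superdiag n_as"
proof
  show "jordan_superdiag (map (\<lambda>(k, a). (k, f a)) n_as) i = jordan_superdiag n_as i" for i
    by (induction n_as arbitrary: i) auto
qed

lemma jordan_diag_mem: "i < sum_list (map fst n_as) \<Longrightarrow> jordan_diag n_as i \<in> snd ` set n_as"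
  by (induction n_as arbitrary: i) (force split: if_splits)+

lemma jordan_superdiag_within_block:
  "jordan_superdiag n_as i \<Longrightarrow> Suc i < sum_list (map fst n_as) \<and> jordan_diag n_as (Suc i) = jordan_diag n_as i"
proof (induction n_as arbitrary: i)
  case (Cons x xs)
  obtain k c where x: "x = (k, c)" by force
  show ?case
  proof (cases "i < k")
    case False
    with Cons.prems have "jordan_superdiag xs (i - k)" by (simp add: x)
    from Cons.IH[OF this] False show ?thesis by (auto simp: x Suc_diff_le)
  qed (use Cons.prems in \<open>auto simp: x\<close>)
qed simp

lemma jordan_matrix_relabel:
  "jordan_matrix (map (\<lambda>(k, a). (k, f a)) n_as) =
   bidiag_mat (sum_list (map fst n_as)) (\<lambda>i. f (jordan_diag n_as i)) (jordan_superdiag n_as)"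
proof -
  have "sum_list (map fst (map (\<lambda>(k, a). (k, f a)) n_as)) = sum_list (map fst n_as)"
    by (induction n_as) auto
  then show ?thesis
    unfolding jordan_matrix_bidiag jordan_superdiag_map
    by (auto intro: bidiag_mat_cong simp: jordan_diag_map)
qed

theorem theorem3:
  fixes n d :: nat and B P Q :: "complex mat" and n_as :: "(nat \<times> complex) list"
    and f :: "complex \<Rightarrow> complex" and \<psi> :: "(nat \<Rightarrow> nat) \<Rightarrow> complex"
  assumes "n \<ge> 2"
    and "P \<in> carrier_mat d d" and "Q \<in> carrier_mat d d"
    and "P * Q = 1\<^sub>m d" and "Q * P = 1\<^sub>m d"
    and "\<forall>(k, a) \<in> set n_as. 0 < k"
    and "sum_list (map fst n_as) = d"
    and "B = P * jordan_matrix n_as * Q"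
    and "inj_on f (snd ` set n_as)"
    and "symmetric_tensor n d \<psi>"
  shows "symmetric_tensor n d (apply_first d B \<psi>) \<longleftrightarrow>
         symmetric_tensor n d
           (apply_first d (P * jordan_matrix (map (\<lambda>(k, a). (k, f a)) n_as) * Q) \<psi>)"
proof -
  \<comment> \<open>blocks of size 0 are harmless\<close>
  note P = assms(2) and Q = assms(3) and PQ = assms(4) and QP = assms(5)
  let ?\<mu> = "jordan_diag n_as" and ?\<nu> = "\<lambda>i. f (jordan_diag n_as i)" and ?s = "jordan_superdiag n_as"
  have J: "jordan_matrix n_as = bidiag_mat d ?\<mu> ?s"
    using jordan_matrix_bidiag[of n_as] unfolding assms(7) .
  have J': "jordan_matrix (map (\<lambda>(k, a). (k, f a)) n_as) = bidiag_mat d ?\<nu> ?s"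
    using jordan_matrix_relabel[of f n_as] unfolding assms(7) .
  have chain: "\<forall>i. ?s i \<longrightarrow> Suc i < d \<and> ?\<mu> (Suc i) = ?\<mu> i"
    using jordan_superdiag_within_block assms(7) by blast
  have same_eq: "\<forall>a<d. \<forall>b<d. ?\<mu> a = ?\<mu> b \<longleftrightarrow> ?\<nu> a = ?\<nu> b"
    using jordan_diag_mem[of _ n_as] inj_onD[OF assms(9)] assms(7) by metis
  have slice: "(P * bidiag_mat d ?\<mu> ?s * Q) * M = M * transpose_mat (P * bidiag_mat d ?\<mu> ?s * Q) \<longleftrightarrow>
               (P * bidiag_mat d ?\<nu> ?s * Q) * M = M * transpose_mat (P * bidiag_mat d ?\<nu> ?s * Q)"
    if M: "M \<in> carrier_mat d d" for M
  proof -
    have X: "Q * M * transpose_mat Q \<in> carrier_mat d d" using Q M by simp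
    show ?thesis
      unfolding conjugate_intertwines_iff[OF P Q PQ QP bidiag_mat_carrier M]
      by (rule bidiag_intertwines_relabel[OF X chain same_eq])
  qed
  have "0 < n" using assms(1) by simp
  note slices = symmetric_apply_first_iff_slices_intertwine[OF _ this assms(10)]
  have "symmetric_tensor n d (apply_first d (P * bidiag_mat d ?\<mu> ?s * Q) \<psi>) \<longleftrightarrow>
        symmetric_tensor n d (apply_first d (P * bidiag_mat d ?\<nu> ?s * Q) \<psi>)"
    unfolding slices[OF mult_carrier_mat[OF mult_carrier_mat[OF P bidiag_mat_carrier] Q]]
    using slice[OF slice_mat_carrier] by blast
  then show ?thesis unfolding assms(8) J J' .
qed

end
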